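(* Let $R$ be a ring, $n\ge1$ and $\frac{A}{B}\in\mathcal{F}_n(R)$. There exists a unique pair $(U_1,V_1)$ of polynomials in $R[X]$ with $\deg U_1=n-1$, $\deg V_1\le n-1$ and $AU_1+BV_1=X^{2n-1}$. Let $\phi_n(\frac{A}{B})$ be the opposite of the coefficient of $X^{n-1}$ in $V_1$. Then the resulting scheme morphism $\phi_n:\mathcal{F}_n\to\mathbf{A}^1$ is $\mathbf{G}_a$-equivariant; in particular $\mathcal{F}_n\simeq\phi_n^{-1}(0)\times\mathbf{A}^1$.
   Context: For a ring $R$ and $n\ge1$, $\mathcal{F}_n(R)$ is the set of pairs $(A,B)$, written $\frac{A}{B}$, of polynomials in $R[X]$ with $A$ monic of degree $n$, $\deg B<n$ and $\mathrm{res}_{n,n}(A,B)\in R^\times$; $\mathcal{F}_n$ is the representing scheme (an open subscheme of $\mathbf{A}^{2n}$ over a base field $k$). The additive group $\mathbf{G}_a$ acts on $\mathcal{F}_n$ by $h\cdot\frac{A}{B}=\frac{A+hB}{B}$ and on $\mathbf{A}^1$ by translation. *)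

theory Defs
  imports "Subresultants.Resultant_Prelim"
begin

definition Fn :: "nat \<Rightarrow> ('a::comm_ring_1 poly \<times> 'a poly) set" where
  "Fn n = {(A, B). degree A = n \<and> lead_coeff A = 1 \<and> degree B < n
                  \<and> resultant_sub n n A B dvd 1}"

definition UV_cond :: "nat \<Rightarrow> 'a::comm_ring_1 poly \<Rightarrow> 'a poly \<Rightarrow> 'a poly \<Rightarrow> 'a poly \<Rightarrow> bool" where
  "UV_cond n A B U V \<longleftrightarrow> degree U = n - 1 \<and> degree V \<le> n - 1
                         \<and> A * U + B * V = monom 1 (2 * n - 1)"

definition phi :: "nat \<Rightarrow> ('a::comm_ring_1 poly \<times> 'a poly) \<Rightarrow> 'a" where
  "phi n AB = - coeff (snd (THE UV. UV_cond n (fst AB) (snd AB) (fst UV) (snd UV))) (n - 1)"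

end

theory Submission
  imports Defs
begin

text \<open>With formal degrees (n, n), the transposed Sylvester matrix of (A, B) is the matrix of the
  linear map (U, V) \<mapsto> A U + B V from pairs of polynomials of degree < n to polynomials of
  degree < 2n. Its determinant res_{n,n}(A, B) is a unit, so the map is bijective; this gives
  (U_1, V_1), and comparing coefficients of X^{2n-1} shows that U_1 is monic because A is.
  Replacing A by A + hB is a unipotent row operation on the Sylvester matrix and turns the
  solution into (U_1, V_1 - h U_1), so phi_n increases by h; ring homomorphisms commute with the
  whole construction.\<close>

lemma sum_lessThan_add: "(\<Sum>i<n + m. f i) = (\<Sum>i<n. f i) + (\<Sum>i<m. f (n + i))"
  for f :: "nat \<Rightarrow> 'a::comm_monoid_add"
  by (induction m) (simp_all add: add.assoc)

lemma coeff_mult_degree_less: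
  fixes A U :: "'a::comm_semiring_0 poly"
  assumes "degree U < k"
  shows "coeff (A * U) l = (\<Sum>t<k. coeff U t * (if t \<le> l then coeff A (l - t) else 0))"
proof -
  have "coeff (A * U) l = (\<Sum>t\<le>l. coeff U t * coeff A (l - t))"
    by (subst mult.commute) (rule coeff_mult)
  also have "\<dots> = (\<Sum>t\<in>{..l} \<union> {..<k}. coeff U t * (if t \<le> l then coeff A (l - t) else 0))"
    by (rule sum.mono_neutral_cong_left) (use assms in \<open>auto simp: coeff_eq_0\<close>)
  also have "\<dots> = (\<Sum>t<k. coeff U t * (if t \<le> l then coeff A (l - t) else 0))"
    by (rule sum.mono_neutral_cong_right) (use assms in \<open>auto simp: coeff_eq_0\<close>)
  finally show ?thesis .
qed

lemma coeff_mult_reversed: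
  fixes A U :: "'a::comm_semiring_0 poly"
  assumes U: "degree U < k" and A: "degree A \<le> m" and j: "j < m + k"
  shows "coeff (A * U) (m + k - 1 - j)
    = (\<Sum>i<k. (if i \<le> j \<and> j \<le> m + i then coeff A (m + i - j) else 0) * coeff U (k - 1 - i))"
proof -
  have "coeff (A * U) (m + k - 1 - j)
      = (\<Sum>i<k. coeff U (k - Suc i) * (if k - Suc i \<le> m + k - 1 - j
                                      then coeff A (m + k - 1 - j - (k - Suc i)) else 0))"
    unfolding coeff_mult_degree_less[OF U] by (rule sum.nat_diff_reindex[symmetric])
  also have "\<dots> = (\<Sum>i<k. (if i \<le> j \<and> j \<le> m + i then coeff A (m + i - j) else 0) * coeff U (k - 1 - i))"
  proof (rule sum.cong[OF refl])
    fix i assume i: "i \<in> {..<k}"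
    show "coeff U (k - Suc i) * (if k - Suc i \<le> m + k - 1 - j
                                 then coeff A (m + k - 1 - j - (k - Suc i)) else 0)
        = (if i \<le> j \<and> j \<le> m + i then coeff A (m + i - j) else 0) * coeff U (k - 1 - i)"
    proof (cases "j < i")
      case True
      then have "coeff A (m + k - 1 - j - (k - Suc i)) = 0" using i A by (intro coeff_eq_0) auto
      then show ?thesis using True by auto
    next
      case False
      then have "m + k - 1 - j - (k - Suc i) = m + i - j" "(k - Suc i \<le> m + k - 1 - j) = (j \<le> m + i)"
        using i j by auto
      then show ?thesis using False by (auto simp: mult.commute)
    qed
  qed
  finally show ?thesis .
qed

text \<open>The coefficients of U and V are listed from the top degree down; the transposed Sylvester
  matrix maps this vector to the coefficients of A U + B V, again listed from the top.\<close>
definition sylvester_vec :: "nat \<Rightarrow> nat \<Rightarrow> 'a::zero poly \<Rightarrow> 'a poly \<Rightarrow> 'a vec" where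
  "sylvester_vec m n U V =
     vec (m + n) (\<lambda>i. if i < n then coeff U (n - 1 - i) else coeff V (m + n - 1 - i))"

lemma sylvester_vec_carrier: "sylvester_vec m n U V \<in> carrier_vec (m + n)"
  by (simp add: sylvester_vec_def)

lemma coeff_combination_sylvester:
  fixes A B U V :: "'a::comm_semiring_0 poly"
  assumes U: "degree U < n" and V: "degree V < m" and A: "degree A \<le> m" and B: "degree B \<le> n"
    and j: "j < m + n"
  shows "coeff (A * U + B * V) (m + n - 1 - j)
    = (transpose_mat (sylvester_mat_sub m n A B) *\<^sub>v sylvester_vec m n U V) $ j"
proof -
  let ?S = "sylvester_mat_sub m n A B" and ?x = "sylvester_vec m n U V"
  have "(transpose_mat ?S *\<^sub>v ?x) $ j = (\<Sum>i<n + m. ?S $$ (i, j) * ?x $ i)"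
    using j by (simp add: scalar_prod_def sylvester_vec_def atLeast0LessThan add.commute)
  also have "\<dots> = (\<Sum>i<n. ?S $$ (i, j) * ?x $ i) + (\<Sum>i<m. ?S $$ (n + i, j) * ?x $ (n + i))"
    by (rule sum_lessThan_add)
  also have "\<dots> = coeff (A * U) (m + n - 1 - j) + coeff (B * V) (n + m - 1 - j)"
    unfolding coeff_mult_reversed[OF U A j] coeff_mult_reversed[OF V B j[unfolded add.commute[of m]]] using j
    by (intro arg_cong2[where f = "(+)"] sum.cong)
       (auto simp: sylvester_mat_sub_index sylvester_vec_def add.commute)
  finally show ?thesis by (simp add: add.commute)
qed

lemma coeff_sylvester_vec:
  shows "k < n \<Longrightarrow> sylvester_vec m n U V $ (n - 1 - k) = coeff U k"
    and "k < m \<Longrightarrow> sylvester_vec m n U V $ (m + n - 1 - k) = coeff V k"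
  by (auto simp: sylvester_vec_def)

lemma sylvester_vec_inj:
  assumes "degree U < n" "degree V < m" "degree U' < n" "degree V' < m"
    and "sylvester_vec m n U V = sylvester_vec m n U' V'"
  shows "U = U' \<and> V = V'"
proof
  show "U = U'"
  proof (rule poly_eqI)
    fix k show "coeff U k = coeff U' k"
      using assms coeff_sylvester_vec(1)[of k n m U V] coeff_sylvester_vec(1)[of k n m U' V']
      by (cases "k < n") (auto simp: coeff_eq_0)
  qed
  show "V = V'"
  proof (rule poly_eqI)
    fix k show "coeff V k = coeff V' k"
      using assms coeff_sylvester_vec(2)[of k m n U V] coeff_sylvester_vec(2)[of k m n U' V']
      by (cases "k < m") (auto simp: coeff_eq_0)
  qed
qed

lemma sylvester_vec_surj:
  fixes x :: "'a::comm_monoid_add vec"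
  assumes "m \<ge> 1" "n \<ge> 1" and x: "x \<in> carrier_vec (m + n)"
  shows "\<exists>U V. degree U < n \<and> degree V < m \<and> sylvester_vec m n U V = x"
proof -
  define U where "U = (\<Sum>k<n. monom (x $ (n - 1 - k)) k)"
  define V where "V = (\<Sum>k<m. monom (x $ (m + n - 1 - k)) k)"
  have "degree U \<le> n - 1" "degree V \<le> m - 1"
    unfolding U_def V_def by (auto intro!: degree_le simp: coeff_sum coeff_monom)
  then have "degree U < n" "degree V < m" using assms(1,2) by linarith+
  moreover have "sylvester_vec m n U V = x"
    using x by (intro eq_vecI) (auto simp: sylvester_vec_def U_def V_def coeff_sum coeff_monom)
  ultimately show ?thesis by blast
qed

lemma inverse_mat_of_det_dvd_one:
  fixes T :: "'a::comm_ring_1 mat"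
  assumes T: "T \<in> carrier_mat k k" and unit: "det T dvd 1"
  obtains M where "M \<in> carrier_mat k k" "T * M = 1\<^sub>m k" "M * T = 1\<^sub>m k"
proof -
  from unit obtain e where e: "det T * e = 1" by (metis dvdE)
  let ?M = "e \<cdot>\<^sub>m adj_mat T"
  have adj: "adj_mat T \<in> carrier_mat k k" using adj_mat(1)[OF T] .
  have right: "T * ?M = 1\<^sub>m k"
  proof -
    have "T * ?M = e \<cdot>\<^sub>m (det T \<cdot>\<^sub>m 1\<^sub>m k)"
      using mult_smult_distrib[OF T adj] adj_mat(2)[OF T] by simp
    then show ?thesis using e by (auto simp: mult.commute)
  qed
  have left: "?M * T = 1\<^sub>m k"
  proof -
    have "?M * T = e \<cdot>\<^sub>m (det T \<cdot>\<^sub>m 1\<^sub>m k)"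
      using mult_smult_assoc_mat[OF adj T] adj_mat(3)[OF T] by simp
    then show ?thesis using e by (auto simp: mult.commute)
  qed
  show thesis using adj right left by (intro that[of ?M]) simp_all
qed

lemma sylvester_transpose_inverse:
  assumes "resultant_sub m n A B dvd 1"
  obtains M where "M \<in> carrier_mat (m + n) (m + n)"
    "transpose_mat (sylvester_mat_sub m n A B) * M = 1\<^sub>m (m + n)"
    "M * transpose_mat (sylvester_mat_sub m n A B) = 1\<^sub>m (m + n)"
proof (rule inverse_mat_of_det_dvd_one)
  show "transpose_mat (sylvester_mat_sub m n A B) \<in> carrier_mat (m + n) (m + n)"
    by (simp add: sylvester_mat_sub_carrier)
  show "det (transpose_mat (sylvester_mat_sub m n A B)) dvd 1"
    using assms unfolding resultant_sub_def by (subst det_transpose) (auto simp: sylvester_mat_sub_carrier)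
qed

lemma sylvester_combination_unique:
  fixes A B U V U' V' :: "'a::comm_ring_1 poly"
  assumes res: "resultant_sub m n A B dvd 1" and A: "degree A \<le> m" and B: "degree B \<le> n"
    and U: "degree U < n" "degree U' < n" and V: "degree V < m" "degree V' < m"
    and eq: "A * U + B * V = A * U' + B * V'"
  shows "U = U' \<and> V = V'"
proof -
  let ?T = "transpose_mat (sylvester_mat_sub m n A B)"
  obtain M where M: "M \<in> carrier_mat (m + n) (m + n)" "M * ?T = 1\<^sub>m (m + n)"
    using sylvester_transpose_inverse[OF res] by metis
  have T: "?T \<in> carrier_mat (m + n) (m + n)" by (simp add: sylvester_mat_sub_carrier)
  have "?T *\<^sub>v sylvester_vec m n U V = ?T *\<^sub>v sylvester_vec m n U' V'"
  proof (rule eq_vecI)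
    fix j assume "j < dim_vec (?T *\<^sub>v sylvester_vec m n U' V')"
    then have j: "j < m + n" by simp
    show "(?T *\<^sub>v sylvester_vec m n U V) $ j = (?T *\<^sub>v sylvester_vec m n U' V') $ j"
      using eq coeff_combination_sylvester[OF U(1) V(1) A B j]
        coeff_combination_sylvester[OF U(2) V(2) A B j] by simp
  qed simp
  moreover have "x = M *\<^sub>v (?T *\<^sub>v x)" if "x \<in> carrier_vec (m + n)" for x
  proof -
    have "M *\<^sub>v (?T *\<^sub>v x) = (M * ?T) *\<^sub>v x"
      using M T that by (intro assoc_mult_mat_vec[symmetric]) auto
    then show ?thesis using M that by simp
  qed
  ultimately have "sylvester_vec m n U V = sylvester_vec m n U' V'"
    by (metis sylvester_vec_carrier)
  then show ?thesis using sylvester_vec_inj U V by blast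
qed

lemma sylvester_combination_exists:
  fixes A B W :: "'a::comm_ring_1 poly"
  assumes res: "resultant_sub m n A B dvd 1" and A: "degree A \<le> m" and B: "degree B \<le> n"
    and W: "degree W < m + n" and mn: "m \<ge> 1" "n \<ge> 1"
  shows "\<exists>U V. degree U < n \<and> degree V < m \<and> A * U + B * V = W"
proof -
  let ?T = "transpose_mat (sylvester_mat_sub m n A B)"
  obtain M where M: "M \<in> carrier_mat (m + n) (m + n)" "?T * M = 1\<^sub>m (m + n)"
    using sylvester_transpose_inverse[OF res] by metis
  have T: "?T \<in> carrier_mat (m + n) (m + n)" by (simp add: sylvester_mat_sub_carrier)
  define w where "w = vec (m + n) (\<lambda>j. coeff W (m + n - 1 - j))"
  have w: "w \<in> carrier_vec (m + n)" by (simp add: w_def)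
  obtain U V where U: "degree U < n" and V: "degree V < m"
    and UV: "sylvester_vec m n U V = M *\<^sub>v w"
    using sylvester_vec_surj[OF mn mult_mat_vec_carrier[OF M(1) w]] by blast
  have Tw: "?T *\<^sub>v sylvester_vec m n U V = w"
    using M T w by (simp add: UV assoc_mult_mat_vec[symmetric])
  have "A * U + B * V = W"
  proof (rule poly_eqI)
    fix k show "coeff (A * U + B * V) k = coeff W k"
    proof (cases "k < m + n")
      case True
      then have "m + n - 1 - k < m + n" "k = m + n - 1 - (m + n - 1 - k)" by auto
      then show ?thesis
        using coeff_combination_sylvester[OF U V A B, of "m + n - 1 - k"] by (simp add: Tw w_def)
    next
      case False
      have "degree (A * U + B * V) < m + n"
        using degree_add_le_max[of "A * U" "B * V"] degree_mult_le[of A U] degree_mult_le[of B V]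
          A B U V by linarith
      then show ?thesis using False W by (metis coeff_eq_0 le_less_trans not_le)
    qed
  qed
  then show ?thesis using U V by blast
qed

lemma coeff_combination_top:
  fixes A B U V :: "'a::comm_ring_1 poly"
  assumes A: "degree A = n" "lead_coeff A = 1" and B: "degree B < n"
    and U: "degree U < n" and V: "degree V < n"
  shows "coeff (A * U + B * V) (2 * n - 1) = coeff U (n - 1)"
proof -
  have "coeff (B * V) (2 * n - 1) = 0"
    using degree_mult_le[of B V] B V by (intro coeff_eq_0) linarith
  moreover have "coeff (A * U) (2 * n - 1) = coeff U (n - 1)"
  proof (cases "degree U = n - 1")
    case True
    then have "2 * n - 1 = degree A + degree U" using A U by linarith
    then show ?thesis using coeff_mult_degree_sum[of A U] A True by simp
  next
    case False
    then have "coeff U (n - 1) = 0" using U by (intro coeff_eq_0) linarith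
    moreover have "coeff (A * U) (2 * n - 1) = 0"
      using degree_mult_le[of A U] A U False by (intro coeff_eq_0) linarith
    ultimately show ?thesis by simp
  qed
  ultimately show ?thesis by simp
qed

text \<open>The condition deg U = n - 1 is automatic: comparing coefficients of X^{2n-1} shows that
  U is even monic.\<close>
lemma UV_cond_iff:
  fixes A B U V :: "'a::comm_ring_1 poly"
  assumes A: "degree A = n" "lead_coeff A = 1" and B: "degree B < n"
  shows "UV_cond n A B U V \<longleftrightarrow>
    degree U < n \<and> degree V < n \<and> A * U + B * V = monom 1 (2 * n - 1)"
proof
  assume "degree U < n \<and> degree V < n \<and> A * U + B * V = monom 1 (2 * n - 1)"
  then have U: "degree U < n" and V: "degree V < n" and eq: "A * U + B * V = monom 1 (2 * n - 1)"
    by auto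
  have "coeff U (n - 1) = 1" using coeff_combination_top[OF A B U V] eq by simp
  then have "degree U \<ge> n - 1" by (metis le_degree one_neq_zero)
  then have "degree U = n - 1" "degree V \<le> n - 1" using U V by linarith+
  then show "UV_cond n A B U V" using eq by (simp add: UV_cond_def)
next
  assume "UV_cond n A B U V"
  then show "degree U < n \<and> degree V < n \<and> A * U + B * V = monom 1 (2 * n - 1)"
    using B by (auto simp: UV_cond_def)
qed

lemma UV_cond_monic:
  assumes F: "(A, B) \<in> Fn n" and UV: "UV_cond n A B U V"
  shows "coeff U (n - 1) = 1"
proof -
  from F have A: "degree A = n" "lead_coeff A = 1" and B: "degree B < n" by (auto simp: Fn_def)
  with UV have U: "degree U < n" and V: "degree V < n"
    and eq: "A * U + B * V = monom 1 (2 * n - 1)" by (auto simp: UV_cond_iff)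
  show ?thesis using coeff_combination_top[OF A B U V] unfolding eq by simp
qed

lemma UV_cond_ex1:
  assumes F: "(A, B) \<in> Fn n" and n: "n \<ge> 1"
  shows "\<exists>!(U, V). UV_cond n A B U V"
proof -
  from F have A: "degree A = n" "lead_coeff A = 1" and B: "degree B < n"
    and res: "resultant_sub n n A B dvd 1" by (auto simp: Fn_def)
  have X: "degree (monom 1 (2 * n - 1) :: 'a poly) < n + n" using n by (simp add: degree_monom_eq)
  obtain U V where UV: "degree U < n" "degree V < n" "A * U + B * V = monom 1 (2 * n - 1)"
    using sylvester_combination_exists[OF res _ _ X n n] A B by auto
  then have "UV_cond n A B U V" by (simp add: UV_cond_iff[OF A B])
  moreover have "UV' = (U, V)" if "UV_cond n A B (fst UV') (snd UV')" for UV'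
  proof -
    from that have U': "degree (fst UV') < n" and V': "degree (snd UV') < n"
      and eq: "A * fst UV' + B * snd UV' = A * U + B * V"
      using UV by (simp_all add: UV_cond_iff[OF A B])
    have "fst UV' = U \<and> snd UV' = V"
      using sylvester_combination_unique[OF res _ _ U' UV(1) V' UV(2) eq] A B by simp
    then show ?thesis by (simp add: prod_eq_iff)
  qed
  ultimately show ?thesis by (intro ex1I[of _ "(U, V)"]) (simp_all add: case_prod_beta)
qed

lemma phi_eqI:
  assumes "(A, B) \<in> Fn n" "n \<ge> 1" "UV_cond n A B U V"
  shows "phi n (A, B) = - coeff V (n - 1)"
proof -
  have "(THE UV. UV_cond n A B (fst UV) (snd UV)) = (U, V)"
    using UV_cond_ex1[OF assms(1,2), unfolded case_prod_beta] assms(3) by (intro the1_equality) auto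
  then show ?thesis by (simp add: phi_def)
qed

text \<open>In the Sylvester matrix of (A + hB, B) each of the first n rows is the corresponding
  row of the Sylvester matrix of (A, B) plus h times the row n further down; so the two
  matrices differ by a unipotent upper triangular factor.\<close>
lemma resultant_sub_add_smult:
  fixes A B :: "'a::comm_ring_1 poly"
  shows "resultant_sub n n (A + smult h B) B = resultant_sub n n A B"
proof -
  let ?S = "sylvester_mat_sub n n A B"
  define E :: "'a mat" where
    "E = mat (n + n) (n + n) (\<lambda>(i, k). (if i = k then 1 else 0) + (if k = i + n then h else 0))"
  have E: "E \<in> carrier_mat (n + n) (n + n)" by (simp add: E_def)
  have S: "?S \<in> carrier_mat (n + n) (n + n)" by (rule sylvester_mat_sub_carrier)
  have "sylvester_mat_sub n n (A + smult h B) B = E * ?S"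
  proof (rule eq_matI)
    fix i j assume "i < dim_row (E * ?S)" "j < dim_col (E * ?S)"
    then have i: "i < n + n" and j: "j < n + n" using E by auto
    have "(E * ?S) $$ (i, j) = (\<Sum>k\<in>{0..<n + n}. E $$ (i, k) * ?S $$ (k, j))"
      using i j E by (simp add: scalar_prod_def)
    also have "\<dots> = (\<Sum>k\<in>{0..<n + n}. (if k = i then ?S $$ (k, j) else 0)
                                        + (if k = i + n then h * ?S $$ (k, j) else 0))"
      by (rule sum.cong) (auto simp: E_def i)
    also have "\<dots> = ?S $$ (i, j) + (if i < n then h * ?S $$ (i + n, j) else 0)"
      using i by (simp add: sum.distrib)
    also have "\<dots> = sylvester_mat_sub n n (A + smult h B) B $$ (i, j)"
      using i j by (auto simp: sylvester_mat_sub_index algebra_simps)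
    finally show "sylvester_mat_sub n n (A + smult h B) B $$ (i, j) = (E * ?S) $$ (i, j)" ..
  qed (use E in auto)
  moreover have "det E = 1"
  proof -
    have "upper_triangular E" by (auto simp: upper_triangular_def E_def)
    then have "det E = prod_list (diag_mat E)" using det_upper_triangular E by blast
    also have "\<dots> = 1" by (auto simp: diag_mat_def E_def intro!: prod_list_neutral)
    finally show ?thesis .
  qed
  ultimately show ?thesis unfolding resultant_sub_def by (simp add: det_mult[OF E S])
qed

lemma Fn_add_smult:
  assumes "(A, B) \<in> Fn n"
  shows "(A + smult h B, B) \<in> Fn n"
proof -
  from assms have A: "degree A = n" "lead_coeff A = 1" and B: "degree B < n"
    and res: "resultant_sub n n A B dvd 1" by (auto simp: Fn_def)
  have "degree (smult h B) < n" using degree_smult_le[of h B] B by linarith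
  then have deg: "degree (A + smult h B) = n" using A by (simp add: degree_add_eq_left)
  moreover have "lead_coeff (A + smult h B) = 1" using deg A B by (simp add: coeff_eq_0)
  ultimately show ?thesis using B res by (simp add: Fn_def resultant_sub_add_smult)
qed

lemma phi_add_smult:
  assumes F: "(A, B) \<in> Fn n" and n: "n \<ge> 1"
  shows "phi n (A + smult h B, B) = phi n (A, B) + h"
proof -
  obtain U V where UV: "UV_cond n A B U V" using UV_cond_ex1[OF F n] by blast
  have "UV_cond n (A + smult h B) B U (V - smult h U)"
    using UV degree_diff_le[of V "n - 1" "smult h U"] degree_smult_le[of h U]
    by (auto simp: UV_cond_def algebra_simps)
  then have "phi n (A + smult h B, B) = - coeff (V - smult h U) (n - 1)"
    by (rule phi_eqI[OF Fn_add_smult[OF F] n])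
  also have "\<dots> = phi n (A, B) + h"
    using phi_eqI[OF F n UV] UV_cond_monic[OF F UV] by simp
  finally show ?thesis .
qed

context comm_ring_hom
begin

lemma Fn_map_poly:
  assumes "(A, B) \<in> Fn n"
  shows "(map_poly hom A, map_poly hom B) \<in> Fn n"
proof -
  from assms have A: "degree A = n" "lead_coeff A = 1" and B: "degree B < n"
    and res: "resultant_sub n n A B dvd 1" by (auto simp: Fn_def)
  have "degree (map_poly hom A) = degree A" using A by (intro degree_map_poly) auto
  then have "degree (map_poly hom A) = n" "lead_coeff (map_poly hom A) = 1" using A by simp_all
  moreover have "degree (map_poly hom B) < n" using degree_map_poly_le[of hom B] B by linarith
  moreover have "resultant_sub n n (map_poly hom A) (map_poly hom B) = hom (resultant_sub n n A B)"
    unfolding resultant_sub_def sylvester_mat_sub_map[of hom, OF hom_zero, symmetric] by simp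
  ultimately show ?thesis using res by (simp add: Fn_def)
qed

lemma phi_map_poly:
  assumes F: "(A, B) \<in> Fn n" and n: "n \<ge> 1"
  shows "phi n (map_poly hom A, map_poly hom B) = hom (phi n (A, B))"
proof -
  interpret map_poly_hom: map_poly_comm_ring_hom hom ..
  from F have A: "degree A = n" "lead_coeff A = 1" and B: "degree B < n" by (auto simp: Fn_def)
  have A': "degree (map_poly hom A) = n" "lead_coeff (map_poly hom A) = 1"
    and B': "degree (map_poly hom B) < n"
    using Fn_map_poly[OF F] by (auto simp: Fn_def)
  obtain U V where UV: "UV_cond n A B U V" using UV_cond_ex1[OF F n] by blast
  then have U: "degree U < n" and V: "degree V < n" and eq: "A * U + B * V = monom 1 (2 * n - 1)"
    by (simp_all add: UV_cond_iff[OF A B])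
  have "map_poly hom A * map_poly hom U + map_poly hom B * map_poly hom V
      = map_poly hom (A * U + B * V)" by (simp add: hom_distribs)
  also have "\<dots> = monom 1 (2 * n - 1)" by (simp add: eq)
  finally have "degree (map_poly hom U) < n" "degree (map_poly hom V) < n"
    "map_poly hom A * map_poly hom U + map_poly hom B * map_poly hom V = monom 1 (2 * n - 1)"
    using U V degree_map_poly_le[of hom U] degree_map_poly_le[of hom V] by simp_all
  then have "UV_cond n (map_poly hom A) (map_poly hom B) (map_poly hom U) (map_poly hom V)"
    by (simp add: UV_cond_iff[OF A' B'])
  then have "phi n (map_poly hom A, map_poly hom B) = - coeff (map_poly hom V) (n - 1)"
    by (rule phi_eqI[OF Fn_map_poly[OF F] n])
  also have "\<dots> = hom (phi n (A, B))" using phi_eqI[OF F n UV] by (simp add: hom_distribs)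
  finally show ?thesis .
qed

end

theorem lemma3p18:
  fixes n :: nat
  assumes "n \<ge> 1"
  shows
    "(\<forall>(A, B) \<in> (Fn n :: ('a::comm_ring_1 poly \<times> 'a poly) set).
        \<exists>!(U, V). UV_cond n A B U V)
   \<and> (\<forall>(A, B) \<in> (Fn n :: ('a::comm_ring_1 poly \<times> 'a poly) set). \<forall>h :: 'a.
        (A + smult h B, B) \<in> Fn n \<and> phi n (A + smult h B, B) = phi n (A, B) + h)
   \<and> (\<forall>f :: 'a \<Rightarrow> 'b::comm_ring_1.
        (f 1 = 1 \<and> (\<forall>x y. f (x + y) = f x + f y) \<and> (\<forall>x y. f (x * y) = f x * f y)) \<longrightarrow>
        (\<forall>(A, B) \<in> (Fn n :: ('a poly \<times> 'a poly) set).
           (map_poly f A, map_poly f B) \<in> Fn n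
           \<and> phi n (map_poly f A, map_poly f B) = f (phi n (A, B))))
   \<and> bij_betw (\<lambda>(A, B). ((A - smult (phi n (A, B)) B, B), phi n (A, B)))
        (Fn n :: ('a poly \<times> 'a poly) set)
        ({x \<in> Fn n. phi n x = 0} \<times> (UNIV :: 'a set))"
proof (intro conjI)
  show "\<forall>(A, B) \<in> (Fn n :: ('a poly \<times> 'a poly) set). \<exists>!(U, V). UV_cond n A B U V"
    using UV_cond_ex1[OF _ assms] by (intro ballI) (clarsimp simp only:)
  show "\<forall>(A, B) \<in> (Fn n :: ('a poly \<times> 'a poly) set). \<forall>h.
      (A + smult h B, B) \<in> Fn n \<and> phi n (A + smult h B, B) = phi n (A, B) + h"
    using Fn_add_smult phi_add_smult[OF _ assms] by blast
  show "\<forall>f :: 'a \<Rightarrow> 'b.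
        (f 1 = 1 \<and> (\<forall>x y. f (x + y) = f x + f y) \<and> (\<forall>x y. f (x * y) = f x * f y)) \<longrightarrow>
        (\<forall>(A, B) \<in> Fn n. (map_poly f A, map_poly f B) \<in> Fn n
           \<and> phi n (map_poly f A, map_poly f B) = f (phi n (A, B)))"
  proof (intro allI impI)
    fix f :: "'a \<Rightarrow> 'b"
    assume f: "f 1 = 1 \<and> (\<forall>x y. f (x + y) = f x + f y) \<and> (\<forall>x y. f (x * y) = f x * f y)"
    then have "f 0 = 0" by (metis add_cancel_right_right add_0)
    with f interpret comm_ring_hom f by unfold_locales auto
    show "\<forall>(A, B) \<in> Fn n. (map_poly f A, map_poly f B) \<in> Fn n
        \<and> phi n (map_poly f A, map_poly f B) = f (phi n (A, B))"
      using Fn_map_poly phi_map_poly[OF _ assms] by blast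
  qed
  have shift_back: "(A - smult t B, B) \<in> Fn n" "phi n (A - smult t B, B) = phi n (A, B) - t"
    if "(A, B) \<in> Fn n" for A B :: "'a poly" and t
    using Fn_add_smult[OF that, of "- t"] phi_add_smult[OF that assms, of "- t"] by simp_all
  show "bij_betw (\<lambda>(A, B). ((A - smult (phi n (A, B)) B, B), phi n (A, B)))
      (Fn n :: ('a poly \<times> 'a poly) set) ({x \<in> Fn n. phi n x = 0} \<times> UNIV)"
    by (rule bij_betw_byWitness[where f' = "\<lambda>((A, B), t). (A + smult t B, B)"])
       (auto simp: shift_back Fn_add_smult phi_add_smult[OF _ assms])
qed

end
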